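(* Let $F(z,u,x)$ be a formal power series and suppose that there are functions $c(x)$ and $\rho(x)$, analytic at $x=0$, with $c(0)\neq0$, $\rho(0)>0$ and $\rho'(0)\neq 0$, such that \[ [z^n]F(z,0,x)=c(x)\,n^{-5/2}\rho(x)^n\Big(1+O\big(\tfrac1n\big)\Big) \] uniformly for $x$ in a compact neighborhood of $x=0$. Then, for $k=k(n)=\Theta(\sqrt n)$, as $n\to\infty$, \[ k!\,[z^nx^k]F(z,0,x)\sim c(0)\,n^{k-5/2}\rho(0)^n\Big(\frac{\rho'(0)}{\rho(0)}\Big)^k\exp\!\Big(\frac{k^2}{2n}\Big(\frac{\rho''(0)\rho(0)}{\rho'(0)^2}-1\Big)\Big). \] *)

theory Defs
  imports "HOL-Complex_Analysis.Complex_Analysis" "HOL-Library.Landau_Symbols"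
begin

text \<open>The series F(z,0,x) is represented by its coefficient array a n k = [z^n x^k] F(z,0,x).
  The generating function in x of the n-th z-coefficient: [z^n] F(z,0,x).\<close>
definition zcoeff_fun :: "(nat \<Rightarrow> nat \<Rightarrow> complex) \<Rightarrow> nat \<Rightarrow> complex \<Rightarrow> complex" where
  "zcoeff_fun a n x = (\<Sum>j. a n j * x ^ j)"

end

theory Submission
  imports Defs
begin

text \<open>
  Let a = \<rho>'(0)/\<rho>(0) and \<psi>(x) = \<rho>(x)/\<rho>(0) e^(-ax), so that
  \<rho>(x)^n = \<rho>(0)^n e^(nax) \<psi>(x)^n with \<psi>(0) = 1 and \<psi>'(0) = 0. After division by
  n^(-5/2) \<rho>(0)^n the n-th coefficient function is G(x) e^(nax) with G = c \<psi>^n, up to a relative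
  error O(1/n), and k! [x^k] is the k-th derivative at 0. Everything is estimated by Cauchy's
  inequality on circles of radius comparable to |s|, where s = k/(na) is the saddle point of
  e^(nax) x^(-k); as k = O(\<surd>n), n|s|^2 is bounded and so is \<psi>(x)^n on these circles.

  By Leibniz' rule the k-th derivative of G(x) e^(nax) at 0, divided by (na)^k, is the Taylor series
  of G at s with each power k^j replaced by the falling factorial k(k-1)\<dots>(k-j+1), which changes
  the value by O(1/k). The relative error term contributes k! e^k / (n k^k) = O(k/n). Finally
  G(s) = c(s) \<psi>(s)^n is asymptotic to c(0) exp(n \<psi>''(0) s^2/2), and
  n \<psi>''(0) s^2/2 = k^2/(2n) (\<rho>''(0) \<rho>(0) / \<rho>'(0)^2 - 1).
\<close>

lemma higher_deriv_exp_linear: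
  "(deriv ^^ m) (\<lambda>x. exp (u * x)) = (\<lambda>x::complex. u ^ m * exp (u * x))"
proof (induction m)
  case (Suc m)
  have "deriv (\<lambda>x. u ^ m * exp (u * x)) x = u ^ Suc m * exp (u * x)" for x
    by (rule DERIV_imp_deriv) (auto intro!: derivative_eq_intros)
  then show ?case
    unfolding funpow.simps comp_def Suc.IH by (simp add: fun_eq_iff)
qed simp

lemma higher_deriv_mult_exp_linear:
  fixes G :: "complex \<Rightarrow> complex"
  assumes "G holomorphic_on S" "open S" "z \<in> S"
  shows "(deriv ^^ k) (\<lambda>x. G x * exp (u * x)) z
           = (\<Sum>j=0..k. of_nat (k choose j) * (deriv ^^ j) G z * u ^ (k - j)) * exp (u * z)"
proof -
  have "(deriv ^^ k) (\<lambda>x. G x * exp (u * x)) z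
      = (\<Sum>j=0..k. of_nat (k choose j) * (deriv ^^ j) G z * (deriv ^^ (k - j)) (\<lambda>x. exp (u * x)) z)"
    using assms by (intro higher_deriv_mult) (auto intro: holomorphic_intros)
  then show ?thesis
    unfolding higher_deriv_exp_linear by (simp add: sum_distrib_left mult_ac)
qed

lemma holomorphic_Taylor_bound:
  fixes f :: "complex \<Rightarrow> complex"
  assumes holf: "f holomorphic_on ball 0 R" and r: "0 < r" "r < R"
  obtains C where "\<And>x. norm x \<le> r \<Longrightarrow>
    norm (f x - (\<Sum>i\<le>n. (deriv ^^ i) f 0 * x ^ i / fact i)) \<le> C * norm x ^ Suc n"
proof -
  have sub: "cball 0 r \<subseteq> ball 0 R" using r by auto
  have "continuous_on (cball 0 r) ((deriv ^^ Suc n) f)"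
    by (intro holomorphic_on_imp_continuous_on holomorphic_on_subset[OF holomorphic_higher_deriv[OF holf] sub]) auto
  then obtain B where B: "\<And>x. x \<in> cball 0 r \<Longrightarrow> norm ((deriv ^^ Suc n) f x) \<le> B"
    using compact_continuous_image[of "cball 0 r"] compact_imp_bounded bounded_iff
    by (metis compact_cball image_eqI)
  have "norm (f x - (\<Sum>i\<le>n. (deriv ^^ i) f 0 * x ^ i / fact i)) \<le> B / fact n * norm x ^ Suc n"
    if x: "norm x \<le> r" for x
  proof -
    have "((deriv ^^ i) f has_field_derivative (deriv ^^ Suc i) f y) (at y within cball 0 r)"
      if "y \<in> cball 0 r" for i y
      using that sub holomorphic_higher_deriv[OF holf, of i]
      by (auto intro!: DERIV_deriv_iff_field_differentiable[THEN iffD2, THEN has_field_derivative_at_within]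
               holomorphic_on_imp_differentiable_at)
    from complex_Taylor[OF convex_cball this B, of 0 x] x r
    show ?thesis by simp
  qed
  then show thesis by (rule that)
qed

lemma abs_binomial_fact_minus_power_le:
  assumes k: "k \<ge> 1"
  shows "\<bar>real (k choose j) * fact j - real k ^ j\<bar> \<le> real j ^ 2 * real k ^ j / real k"
proof (cases "j \<le> k")
  case True
  have "real (k choose j) * fact j = (\<Prod>i<j. real k - real i)"
    by (simp add: binomial_gbinomial gbinomial_prod_rev atLeast0LessThan)
  also have "\<dots> = (\<Prod>i<j. real k * (1 - real i / real k))"
    using k by (intro prod.cong refl) (simp add: field_simps)
  also have "\<dots> = real k ^ j * (\<Prod>i<j. 1 - real i / real k)"
    by (simp add: prod.distrib)
  finally have eq: "real (k choose j) * fact j - real k ^ j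
      = real k ^ j * ((\<Prod>i<j. 1 - real i / real k) - 1)"
    by (simp add: algebra_simps)
  have "\<bar>(\<Prod>i<j. 1 - real i / real k) - 1\<bar> \<le> (\<Sum>i<j. \<bar>(1 - real i / real k) - 1\<bar>)"
    using norm_prod_diff[of "{..<j}" "\<lambda>i. 1 - real i / real k" "\<lambda>_. 1"] True k
    by (simp add: field_simps)
  also have "\<dots> \<le> (\<Sum>i<j. real j / real k)"
    using k by (intro sum_mono) (simp add: divide_right_mono)
  also have "\<dots> = real j ^ 2 / real k" by (simp add: power2_eq_square)
  finally have "real k ^ j * \<bar>(\<Prod>i<j. 1 - real i / real k) - 1\<bar> \<le> real k ^ j * (real j ^ 2 / real k)"
    by (rule mult_left_mono) simp
  then show ?thesis
    unfolding eq abs_mult by (simp add: ac_simps)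
next
  case False
  then have "k \<le> j ^ 2" using le_square[of j] unfolding power2_eq_square by linarith
  then have "real k * real k ^ j / real k \<le> real j ^ 2 * real k ^ j / real k"
    by (intro divide_right_mono mult_right_mono) (simp_all add: of_nat_le_iff[symmetric])
  with k False show ?thesis by (simp add: binomial_eq_0)
qed

text \<open>The induction step amounts to e \<le> (1 + 1/k)^(k+1).\<close>

lemma fact_mult_exp_le:
  assumes "k \<ge> (1::nat)"
  shows "fact k * exp (real k) \<le> exp 1 * real k ^ Suc k"
  using assms
proof (induction k rule: dec_induct)
  case (step k)
  have k: "real k > 0" using step by simp
  have "1 / (real k + 1) \<le> ln ((real k + 1) / real k)"
    using ln_le_minus_one[of "real k / (real k + 1)"] k by (simp add: ln_div field_simps)
  then have "1 \<le> real (Suc k) * ln ((real k + 1) / real k)"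
    using k by (simp add: field_simps)
  then have "exp 1 \<le> exp (real (Suc k) * ln ((real k + 1) / real k))"
    by simp
  also have "\<dots> = ((real k + 1) / real k) ^ Suc k"
    using k by (subst exp_of_nat_mult) simp
  finally have "exp 1 \<le> ((real k + 1) / real k) ^ Suc k" .
  then have e: "exp 1 * real k ^ Suc k \<le> (real k + 1) ^ Suc k"
    using k by (simp add: power_divide field_simps)
  have "fact (Suc k) * exp (real (Suc k)) = (real k + 1) * exp 1 * (fact k * exp (real k))"
    by (simp add: exp_add algebra_simps)
  also have "\<dots> \<le> (real k + 1) * exp 1 * (exp 1 * real k ^ Suc k)"
    using step.IH k by (intro mult_left_mono) auto
  also have "\<dots> \<le> (real k + 1) * exp 1 * (real k + 1) ^ Suc k"
    using e k by (intro mult_left_mono) auto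
  finally show ?case by (simp add: algebra_simps)
qed simp

lemma summable_square_div_power2: "summable (\<lambda>j. real j ^ 2 / 2 ^ j)"
proof (rule summable_ratio_test[where c = "8/9" and N = 3])
  fix n :: nat assume "n \<ge> 3"
  then have n: "real n \<ge> 3" by simp
  then have "21 * real n \<le> 7 * real n * real n" by (intro mult_right_mono) auto
  moreover have "9 * (real n + 1) ^ 2 = 9 * (real n * real n) + 18 * real n + 9"
    by (simp add: power2_eq_square algebra_simps)
  ultimately have "9 * (real n + 1) ^ 2 \<le> 16 * real n ^ 2"
    using n unfolding power2_eq_square by linarith
  then show "norm (real (Suc n) ^ 2 / 2 ^ Suc n) \<le> 8/9 * norm (real n ^ 2 / 2 ^ n)"
    by (simp add: field_simps)
qed simp

section \<open>Saddle-point bounds for a single coefficient\<close>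

lemma saddle_point_bound:
  fixes G :: "complex \<Rightarrow> complex" and u s :: complex
  assumes holG: "G holomorphic_on ball 0 R" and r: "0 < r" "2 * r < R"
    and s: "norm s = r" and us: "u * s = of_nat k" and k: "k \<ge> 1"
    and G_le: "\<And>x. norm x = 2 * r \<Longrightarrow> norm (G x) \<le> M"
  shows "norm ((deriv ^^ k) (\<lambda>x. G x * exp (u * x)) 0 / u ^ k - G s)
           \<le> M / real k * (\<Sum>j. real j ^ 2 / 2 ^ j)"
proof -
  define g where "g j = (deriv ^^ j) G 0" for j
  define t where "t j = of_nat (k choose j) * g j / u ^ j" for j
  have u: "u \<noteq> 0" using us k by auto
  have norm_us: "norm u * r = real k"
    using arg_cong[OF us, of norm] s by (simp add: norm_mult)
  have "norm (G (of_real (2 * r))) \<le> M" using r by (intro G_le) simp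
  then have M: "0 \<le> M" by (rule order_trans[OF norm_ge_zero])
  have sub: "cball 0 (2 * r) \<subseteq> ball 0 R" using r by auto
  have g_le: "norm (g j) \<le> fact j * M / (2 * r) ^ j" for j
    unfolding g_def using sub r G_le
    by (intro Cauchy_inequality holomorphic_on_subset[OF holG]
          holomorphic_on_imp_continuous_on[OF holomorphic_on_subset[OF holG sub]])
       (auto simp: dist_norm)
  have "(deriv ^^ k) (\<lambda>x. G x * exp (u * x)) 0 = (\<Sum>j=0..k. of_nat (k choose j) * g j * u ^ (k - j))"
    using higher_deriv_mult_exp_linear[OF holG open_ball, of 0 k u] r by (simp add: g_def)
  also have "\<dots> = u ^ k * (\<Sum>j=0..k. t j)"
    unfolding t_def sum_distrib_left using u by (intro sum.cong refl) (simp add: power_diff)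
  finally have "(deriv ^^ k) (\<lambda>x. G x * exp (u * x)) 0 / u ^ k = (\<Sum>j=0..k. t j)"
    using u by simp
  moreover have "t sums (\<Sum>j=0..k. t j)"
    by (intro sums_finite) (auto simp: t_def binomial_eq_0)
  ultimately have "t sums ((deriv ^^ k) (\<lambda>x. G x * exp (u * x)) 0 / u ^ k)"
    by simp
  moreover have "(\<lambda>j. g j / fact j * s ^ j) sums G s"
    using holomorphic_power_series[OF holG] s r by (simp add: g_def)
  ultimately have "(\<lambda>j. t j - g j / fact j * s ^ j)
      sums ((deriv ^^ k) (\<lambda>x. G x * exp (u * x)) 0 / u ^ k - G s)"
    by (rule sums_diff)
  moreover have "(\<lambda>j. M / real k * (real j ^ 2 / 2 ^ j)) sums (M / real k * (\<Sum>j. real j ^ 2 / 2 ^ j))"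
    by (intro sums_mult summable_sums summable_square_div_power2)
  txt \<open>Since s = k/u, the two series differ only by the falling factorial k!/(k-j)! in place of
    k^j; bounding G on the circle of radius 2r makes the differences decay like 2^(-j).\<close>
  moreover have "norm (t j - g j / fact j * s ^ j) \<le> M / real k * (real j ^ 2 / 2 ^ j)" for j
  proof -
    have eq: "t j - g j / fact j * s ^ j
        = g j / (fact j * u ^ j) * of_real (real (k choose j) * fact j - real k ^ j)"
      using u by (simp add: t_def flip: us) (simp add: field_simps power_mult_distrib)
    have "norm (t j - g j / fact j * s ^ j)
        = norm (g j) / (fact j * norm u ^ j) * \<bar>real (k choose j) * fact j - real k ^ j\<bar>"
      unfolding eq norm_mult norm_divide norm_power norm_of_real by simp
    also have "\<dots> \<le> (fact j * M / (2 * r) ^ j) / (fact j * norm u ^ j) * (real j ^ 2 * real k ^ j / real k)"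
      using g_le abs_binomial_fact_minus_power_le[OF k] u M r
      by (intro mult_mono divide_right_mono) auto
    also have "\<dots> = M / real k * (real j ^ 2 / 2 ^ j)"
      using r u k by (simp flip: norm_us add: field_simps power_mult_distrib)
    finally show ?thesis .
  qed
  ultimately show ?thesis by (rule norm_sums_le)
qed

text \<open>On the circle |x| = r with |u| r = k a factor exp(u x) is at most e^k, and Cauchy's
  inequality turns this into k! e^k / k^k = O(k).\<close>

lemma higher_deriv_div_power_le:
  fixes E :: "complex \<Rightarrow> complex" and u :: complex
  assumes hol: "E holomorphic_on ball 0 R" and r: "0 < r" "r < R"
    and ur: "norm u * r = real k" and k: "k \<ge> 1"
    and E_le: "\<And>x. norm x = r \<Longrightarrow> norm (E x) \<le> A * exp (real k)"
  shows "norm ((deriv ^^ k) E 0 / u ^ k) \<le> exp 1 * A * real k"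
proof -
  have "norm (E (of_real r)) \<le> A * exp (real k)" using r by (intro E_le) simp
  then have "0 \<le> A * exp (real k)" by (rule order_trans[OF norm_ge_zero])
  then have A: "A \<ge> 0" by (simp add: zero_le_mult_iff)
  have sub: "cball 0 r \<subseteq> ball 0 R" using r by auto
  have "norm ((deriv ^^ k) E 0) \<le> fact k * (A * exp (real k)) / r ^ k"
    using sub r E_le
    by (intro Cauchy_inequality holomorphic_on_subset[OF hol]
          holomorphic_on_imp_continuous_on[OF holomorphic_on_subset[OF hol sub]]) (auto simp: dist_norm)
  then have "norm ((deriv ^^ k) E 0 / u ^ k) \<le> fact k * (A * exp (real k)) / r ^ k / norm u ^ k"
    unfolding norm_divide norm_power by (rule divide_right_mono) simp
  also have "\<dots> = A * (fact k * exp (real k)) / real k ^ k"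
    by (simp add: divide_divide_eq_left power_mult_distrib mult_ac flip: ur)
  also have "\<dots> \<le> A * (exp 1 * real k ^ Suc k) / real k ^ k"
    using fact_mult_exp_le[OF k] A by (intro divide_right_mono mult_left_mono) auto
  also have "\<dots> = exp 1 * A * real k" using k by simp
  finally show ?thesis .
qed

section \<open>Powers of a function that is flat at the origin\<close>

lemma tendsto_0_if_mult_square_bounded:
  fixes s :: "nat \<Rightarrow> 'a::real_normed_vector"
  assumes "eventually (\<lambda>n. real n * norm (s n) ^ 2 \<le> B) sequentially"
  shows "s \<longlonglongrightarrow> 0"
proof (rule Lim_null_comparison)
  show "eventually (\<lambda>n. norm (s n) \<le> sqrt (B * inverse (real n))) sequentially"
    using assms eventually_gt_at_top[of 0]
  proof eventually_elim
    case (elim n)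
    then have "norm (s n) ^ 2 \<le> B * inverse (real n)" by (simp add: field_simps)
    then show ?case by (simp add: real_le_rsqrt)
  qed
  have "(\<lambda>n. sqrt (B * inverse (real n))) \<longlonglongrightarrow> sqrt (B * 0)"
    by (intro tendsto_real_sqrt tendsto_mult tendsto_const lim_inverse_n)
  then show "(\<lambda>n. sqrt (B * inverse (real n))) \<longlonglongrightarrow> 0" by simp
qed

lemma eventually_norm_scaled_square_le:
  fixes s :: "nat \<Rightarrow> 'a::real_normed_field"
  assumes "eventually (\<lambda>n. real n * norm (s n) ^ 2 \<le> B) sequentially"
  shows "eventually (\<lambda>n. norm (of_nat n * b * s n ^ 2) \<le> norm b * B) sequentially"
  using assms
proof eventually_elim
  case (elim n)
  then have "norm b * (real n * norm (s n) ^ 2) \<le> norm b * B" by (intro mult_left_mono) auto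
  then show ?case by (simp add: norm_mult norm_power mult_ac)
qed

lemma scaled_Ln_minus_tendsto_0:
  fixes w \<beta> :: "nat \<Rightarrow> complex"
  assumes w: "w \<longlonglongrightarrow> 0" and w_\<beta>: "(\<lambda>n. of_nat n * w n - \<beta> n) \<longlonglongrightarrow> 0"
    and \<beta>: "eventually (\<lambda>n. norm (\<beta> n) \<le> B) sequentially"
  shows "(\<lambda>n. of_nat n * Ln (1 + w n) - \<beta> n) \<longlonglongrightarrow> 0"
proof (rule Lim_null_comparison)
  have w_small: "eventually (\<lambda>n. norm (w n) \<le> 1/2) sequentially"
    using tendstoD[OF w, of "1/2"] by (auto elim!: eventually_mono)
  show "eventually (\<lambda>n. norm (of_nat n * Ln (1 + w n) - \<beta> n) \<le> 2 * (norm (of_nat n * w n - \<beta> n) + B) * norm (w n)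
      + norm (of_nat n * w n - \<beta> n)) sequentially"
    using w_small \<beta>
  proof eventually_elim
    case (elim n)
    have "norm (Ln (1 + w n) - w n) \<le> norm (w n) ^ 2 / (1 - norm (w n))"
      using elim(1) by (intro Ln_approx_linear) simp
    also have "\<dots> \<le> norm (w n) ^ 2 / (1/2)"
      using elim(1) by (intro divide_left_mono) auto
    finally have "norm (Ln (1 + w n) - w n) \<le> 2 * norm (w n) ^ 2" by simp
    then have "norm (of_nat n * (Ln (1 + w n) - w n)) \<le> 2 * norm (of_nat n * w n) * norm (w n)"
      by (simp add: norm_mult power2_eq_square mult_left_mono mult_ac)
    also have "\<dots> \<le> 2 * (norm (of_nat n * w n - \<beta> n) + B) * norm (w n)"
      using elim(2) norm_triangle_sub[of "of_nat n * w n" "\<beta> n"]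
      by (intro mult_right_mono) auto
    finally have le: "norm (of_nat n * (Ln (1 + w n) - w n))
        \<le> 2 * (norm (of_nat n * w n - \<beta> n) + B) * norm (w n)" .
    have eq: "of_nat n * Ln (1 + w n) - \<beta> n = of_nat n * (Ln (1 + w n) - w n) + (of_nat n * w n - \<beta> n)"
      by (simp add: right_diff_distrib)
    show ?case unfolding eq
      using le norm_triangle_ineq[of "of_nat n * (Ln (1 + w n) - w n)" "of_nat n * w n - \<beta> n"]
      by linarith
  qed
  have "(\<lambda>n. 2 * (norm (of_nat n * w n - \<beta> n) + B) * norm (w n)
      + norm (of_nat n * w n - \<beta> n)) \<longlonglongrightarrow> 2 * (norm (0::complex) + B) * norm (0::complex) + norm (0::complex)"
    by (intro tendsto_add tendsto_mult tendsto_const tendsto_norm w w_\<beta>)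
  then show "(\<lambda>n. 2 * (norm (of_nat n * w n - \<beta> n) + B) * norm (w n)
      + norm (of_nat n * w n - \<beta> n)) \<longlonglongrightarrow> 0" by simp
qed

lemma power_minus_exp_tendsto_0:
  fixes w \<beta> :: "nat \<Rightarrow> complex"
  assumes w: "w \<longlonglongrightarrow> 0" and w_\<beta>: "(\<lambda>n. of_nat n * w n - \<beta> n) \<longlonglongrightarrow> 0"
    and \<beta>: "eventually (\<lambda>n. norm (\<beta> n) \<le> B) sequentially"
  shows "(\<lambda>n. (1 + w n) ^ n - exp (\<beta> n)) \<longlonglongrightarrow> 0"
proof -
  define d where "d n = of_nat n * Ln (1 + w n) - \<beta> n" for n
  have w_small: "eventually (\<lambda>n. norm (w n) \<le> 1/2) sequentially"
    using tendstoD[OF w, of "1/2"] by (auto elim!: eventually_mono)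
  have "d \<longlonglongrightarrow> 0" unfolding d_def by (rule scaled_Ln_minus_tendsto_0[OF w w_\<beta> \<beta>])
  then have "(\<lambda>n. exp B * norm (exp (d n) - 1)) \<longlonglongrightarrow> exp B * norm (exp 0 - 1 :: complex)"
    by (intro tendsto_mult tendsto_const tendsto_norm tendsto_diff tendsto_exp)
  then have "(\<lambda>n. exp B * norm (exp (d n) - 1)) \<longlonglongrightarrow> 0" by simp
  moreover have "eventually (\<lambda>n. norm ((1 + w n) ^ n - exp (\<beta> n)) \<le> exp B * norm (exp (d n) - 1)) sequentially"
    using w_small \<beta>
  proof eventually_elim
    case (elim n)
    then have "w n \<noteq> -1" by auto
    then have "1 + w n \<noteq> 0" by (simp add: add_eq_0_iff)
    have "exp (\<beta> n) * exp (d n) = exp (of_nat n * Ln (1 + w n))"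
      by (simp add: d_def flip: exp_add)
    also have "\<dots> = (1 + w n) ^ n"
      using \<open>1 + w n \<noteq> 0\<close> by (simp add: exp_of_nat_mult)
    finally have "(1 + w n) ^ n = exp (\<beta> n) * exp (d n)" ..
    then have "(1 + w n) ^ n - exp (\<beta> n) = exp (\<beta> n) * (exp (d n) - 1)"
      by (simp add: right_diff_distrib)
    then have "norm ((1 + w n) ^ n - exp (\<beta> n)) = norm (exp (\<beta> n)) * norm (exp (d n) - 1)"
      by (simp add: norm_mult)
    also have "norm (exp (\<beta> n)) \<le> exp B"
      using elim(2) abs_Re_le_cmod[of "\<beta> n"] by simp
    finally show ?case by (simp add: mult_right_mono)
  qed
  ultimately show ?thesis by (auto intro: Lim_null_comparison)
qed

lemma holomorphic_power_minus_exp_tendsto_0: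
  fixes \<psi> :: "complex \<Rightarrow> complex" and s :: "nat \<Rightarrow> complex"
  assumes hol: "\<psi> holomorphic_on ball 0 R" and R: "R > 0"
    and \<psi>0: "\<psi> 0 = 1" and \<psi>'0: "deriv \<psi> 0 = 0"
    and s: "eventually (\<lambda>n. real n * norm (s n) ^ 2 \<le> B) sequentially"
  shows "(\<lambda>n. \<psi> (s n) ^ n - exp (of_nat n * (deriv (deriv \<psi>) 0 / 2) * s n ^ 2)) \<longlonglongrightarrow> 0"
proof -
  define b where "b = deriv (deriv \<psi>) 0 / 2"
  obtain C where C: "\<And>x. norm x \<le> R / 2 \<Longrightarrow> norm (\<psi> x - (1 + b * x ^ 2)) \<le> C * norm x ^ 3"
    using holomorphic_Taylor_bound[OF hol, of "R / 2" 2] R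
    by (simp add: eval_nat_numeral \<psi>0 \<psi>'0 b_def field_simps) blast
  have s0: "s \<longlonglongrightarrow> 0" by (rule tendsto_0_if_mult_square_bounded[OF s])
  have "isCont \<psi> 0"
    using hol R by (intro holomorphic_on_imp_continuous_on[THEN continuous_on_interior]) auto
  then have "(\<lambda>n. \<psi> (s n)) \<longlonglongrightarrow> \<psi> 0" by (rule isCont_tendsto_compose[OF _ s0])
  then have "(\<lambda>n. \<psi> (s n) - 1) \<longlonglongrightarrow> 0" using \<psi>0 by (simp add: LIM_zero)
  moreover have "(\<lambda>n. of_nat n * (\<psi> (s n) - 1) - of_nat n * b * s n ^ 2) \<longlonglongrightarrow> 0"
  proof (rule Lim_null_comparison)
    have "eventually (\<lambda>n. norm (s n) \<le> R / 2) sequentially"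
      using tendstoD[OF s0, of "R / 2"] R by (auto elim!: eventually_mono)
    then show "eventually (\<lambda>n. norm (of_nat n * (\<psi> (s n) - 1) - of_nat n * b * s n ^ 2)
        \<le> \<bar>C\<bar> * \<bar>B\<bar> * norm (s n)) sequentially"
      using s
    proof eventually_elim
      case (elim n)
      have "of_nat n * (\<psi> (s n) - 1) - of_nat n * b * s n ^ 2
          = of_nat n * (\<psi> (s n) - (1 + b * s n ^ 2))"
        by (simp add: algebra_simps)
      then have "norm (of_nat n * (\<psi> (s n) - 1) - of_nat n * b * s n ^ 2)
          = real n * norm (\<psi> (s n) - (1 + b * s n ^ 2))"
        by (simp add: norm_mult)
      also have "\<dots> \<le> real n * (\<bar>C\<bar> * norm (s n) ^ 3)"
        using order_trans[OF C[OF elim(1)] mult_right_mono[OF abs_ge_self]]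
        by (intro mult_left_mono) auto
      also have "\<dots> = \<bar>C\<bar> * (real n * norm (s n) ^ 2) * norm (s n)"
        by (simp add: power2_eq_square power3_eq_cube)
      also have "\<dots> \<le> \<bar>C\<bar> * \<bar>B\<bar> * norm (s n)"
        using elim(2) by (intro mult_right_mono mult_left_mono) auto
      finally show ?case .
    qed
    show "(\<lambda>n. \<bar>C\<bar> * \<bar>B\<bar> * norm (s n)) \<longlonglongrightarrow> 0"
      using tendsto_mult_right_zero[OF tendsto_norm_zero[OF s0]] by simp
  qed
  moreover note eventually_norm_scaled_square_le[OF s, of b]
  ultimately have "(\<lambda>n. (1 + (\<psi> (s n) - 1)) ^ n - exp (of_nat n * b * s n ^ 2)) \<longlonglongrightarrow> 0"
    by (rule power_minus_exp_tendsto_0)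
  then show ?thesis by (simp add: b_def)
qed

lemma mult_power_minus_exp_tendsto_0:
  fixes c \<psi> :: "complex \<Rightarrow> complex" and s :: "nat \<Rightarrow> complex"
  assumes c: "isCont c 0" and \<psi>: "\<psi> holomorphic_on ball 0 R" and R: "R > 0"
    and \<psi>0: "\<psi> 0 = 1" and \<psi>'0: "deriv \<psi> 0 = 0"
    and s: "eventually (\<lambda>n. real n * norm (s n) ^ 2 \<le> B) sequentially"
  shows "(\<lambda>n. c (s n) * \<psi> (s n) ^ n - c 0 * exp (of_nat n * (deriv (deriv \<psi>) 0 / 2) * s n ^ 2))
           \<longlonglongrightarrow> 0"
proof -
  define b where "b = deriv (deriv \<psi>) 0 / 2"
  define \<beta> where "\<beta> n = of_nat n * b * s n ^ 2" for n
  have cs: "(\<lambda>n. c (s n)) \<longlonglongrightarrow> c 0"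
    by (rule isCont_tendsto_compose[OF c tendsto_0_if_mult_square_bounded[OF s]])
  have "(\<lambda>n. \<psi> (s n) ^ n - exp (\<beta> n)) \<longlonglongrightarrow> 0"
    unfolding \<beta>_def b_def by (rule holomorphic_power_minus_exp_tendsto_0[OF \<psi> R \<psi>0 \<psi>'0 s])
  then have "(\<lambda>n. c (s n) * (\<psi> (s n) ^ n - exp (\<beta> n))) \<longlonglongrightarrow> c 0 * 0"
    by (intro tendsto_mult cs)
  moreover have "(\<lambda>n. (c (s n) - c 0) * exp (\<beta> n)) \<longlonglongrightarrow> 0"
  proof (rule Lim_null_comparison)
    show "eventually (\<lambda>n. norm ((c (s n) - c 0) * exp (\<beta> n))
        \<le> norm (c (s n) - c 0) * exp (norm b * B)) sequentially"
      using eventually_norm_scaled_square_le[OF s, of b]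
    proof eventually_elim
      case (elim n)
      have "norm (exp (\<beta> n)) \<le> exp (norm (\<beta> n))" by (rule norm_exp)
      also have "\<dots> \<le> exp (norm b * B)" using elim by (simp add: \<beta>_def)
      finally have "norm (exp (\<beta> n)) \<le> exp (norm b * B)" .
      then show ?case by (simp add: norm_mult mult_left_mono)
    qed
    show "(\<lambda>n. norm (c (s n) - c 0) * exp (norm b * B)) \<longlonglongrightarrow> 0"
      by (intro tendsto_mult_left_zero tendsto_norm_zero LIM_zero cs)
  qed
  ultimately have "(\<lambda>n. c (s n) * (\<psi> (s n) ^ n - exp (\<beta> n)) + (c (s n) - c 0) * exp (\<beta> n)) \<longlonglongrightarrow> 0"
    using tendsto_add_zero by fastforce
  then show ?thesis by (simp add: \<beta>_def b_def algebra_simps)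
qed

lemma holomorphic_mult_power_le_exp:
  fixes c \<psi> :: "complex \<Rightarrow> complex"
  assumes c: "c holomorphic_on ball 0 R" and \<psi>: "\<psi> holomorphic_on ball 0 R" and r: "0 < r" "r < R"
    and \<psi>0: "\<psi> 0 = 1" and \<psi>'0: "deriv \<psi> 0 = 0"
  obtains M H where "\<And>n x. norm x \<le> r \<Longrightarrow> norm (c x * \<psi> x ^ n) \<le> M * exp (H * real n * norm x ^ 2)"
proof -
  obtain H where H: "\<And>x. norm x \<le> r \<Longrightarrow>
      norm (\<psi> x - (\<Sum>i\<le>1. (deriv ^^ i) \<psi> 0 * x ^ i / fact i)) \<le> H * norm x ^ Suc 1"
    using holomorphic_Taylor_bound[OF \<psi> r, where n = 1] by blast
  have "compact (c ` cball 0 r)"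
    using r by (intro compact_continuous_image holomorphic_on_imp_continuous_on
        holomorphic_on_subset[OF c]) auto
  then obtain M where "\<forall>x\<in>cball 0 r. norm (c x) \<le> M"
    by (auto dest!: compact_imp_bounded simp: bounded_iff)
  then have M: "\<And>x. norm x \<le> r \<Longrightarrow> norm (c x) \<le> M" by simp
  have "norm (c x * \<psi> x ^ n) \<le> M * exp (H * real n * norm x ^ 2)" if x: "norm x \<le> r" for n x
  proof -
    have "norm (\<psi> x) \<le> 1 + norm (\<psi> x - 1)"
      using norm_triangle_sub[of "\<psi> x" 1] by simp
    also have "\<dots> \<le> 1 + H * norm x ^ 2"
      using H[OF x] by (simp add: \<psi>0 \<psi>'0 power2_eq_square)
    also have "\<dots> \<le> exp (H * norm x ^ 2)" by (rule exp_ge_add_one_self)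
    finally have "norm (\<psi> x) ^ n \<le> exp (H * norm x ^ 2) ^ n"
      by (intro power_mono) auto
    also have "\<dots> = exp (H * real n * norm x ^ 2)"
      by (simp add: mult_ac flip: exp_of_nat_mult)
    finally show ?thesis
      using M[OF x] unfolding norm_mult norm_power
      by (intro mult_mono) (auto intro: order_trans[OF norm_ge_zero])
  qed
  then show thesis by (rule that)
qed

section \<open>Coefficient asymptotics\<close>

lemma saddle_point_main_term:
  fixes G :: "nat \<Rightarrow> complex \<Rightarrow> complex" and u s :: "nat \<Rightarrow> complex" and k :: "nat \<Rightarrow> nat"
  assumes hol: "\<And>n. G n holomorphic_on ball 0 R" and R: "R > 0"
    and G_le: "\<And>n x. norm x < R \<Longrightarrow> norm (G n x) \<le> M * exp (H * real n * norm x ^ 2)"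
    and us: "eventually (\<lambda>n. u n * s n = of_nat (k n)) sequentially"
    and k: "filterlim k at_top sequentially"
    and s: "eventually (\<lambda>n. real n * norm (s n) ^ 2 \<le> B) sequentially"
  shows "(\<lambda>n. (deriv ^^ k n) (\<lambda>x. G n x * exp (u n * x)) 0 / u n ^ k n - G n (s n))
           \<longlonglongrightarrow> 0"
proof (rule Lim_null_comparison)
  define T where "T = (\<Sum>j. real j ^ 2 / 2 ^ j)"
  define M' where "M' = M * exp (4 * \<bar>H\<bar> * B)"
  have "norm (G 0 0) \<le> M" using G_le[of 0 0] R by simp
  then have M: "M \<ge> 0" by (rule order_trans[OF norm_ge_zero])
  have s0: "s \<longlonglongrightarrow> 0" by (rule tendsto_0_if_mult_square_bounded[OF s])
  have k1: "eventually (\<lambda>n. k n \<ge> 1) sequentially"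
    using k unfolding filterlim_at_top by blast
  have "eventually (\<lambda>n. 2 * norm (s n) < R) sequentially"
    using tendstoD[OF s0, of "R / 2"] R by (auto elim!: eventually_mono)
  then show "eventually (\<lambda>n. norm ((deriv ^^ k n) (\<lambda>x. G n x * exp (u n * x)) 0 / u n ^ k n - G n (s n))
      \<le> M' / real (k n) * T) sequentially"
    using us s k1
  proof eventually_elim
    case (elim n)
    have "norm (G n x) \<le> M'" if x: "norm x = 2 * norm (s n)" for x
    proof -
      have "H * real n * norm x ^ 2 = 4 * H * (real n * norm (s n) ^ 2)"
        using x by (simp add: power2_eq_square)
      also have "\<dots> \<le> 4 * \<bar>H\<bar> * (real n * norm (s n) ^ 2)"
        by (intro mult_right_mono) auto
      also have "\<dots> \<le> 4 * \<bar>H\<bar> * B"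
        using elim(3) by (intro mult_left_mono) auto
      finally have "M * exp (H * real n * norm x ^ 2) \<le> M'"
        unfolding M'_def using M by (intro mult_left_mono) auto
      moreover have "norm (G n x) \<le> M * exp (H * real n * norm x ^ 2)"
        using x elim(1) by (intro G_le) auto
      ultimately show ?thesis by linarith
    qed
    moreover have "norm (s n) > 0" using elim(2,4) by (cases "s n = 0") auto
    ultimately show ?case
      using saddle_point_bound[OF hol[of n], where r = "norm (s n)" and M = M'] elim
      by (simp add: T_def)
  qed
  have "filterlim (\<lambda>n. real (k n)) at_infinity sequentially"
    by (rule filterlim_at_top_imp_at_infinity[OF filterlim_compose[OF filterlim_real_sequentially k]])
  then show "(\<lambda>n. M' / real (k n) * T) \<longlonglongrightarrow> 0"
    by (intro tendsto_mult_left_zero tendsto_divide_0[OF tendsto_const])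
qed

lemma saddle_point_error_term:
  fixes E :: "nat \<Rightarrow> complex \<Rightarrow> complex" and u s :: "nat \<Rightarrow> complex" and k :: "nat \<Rightarrow> nat"
  assumes hol: "\<And>n. E n holomorphic_on ball 0 R" and R: "R > 0"
    and E_le: "eventually (\<lambda>n. \<forall>x\<in>ball 0 R.
       norm (E n x) \<le> A / real n * exp (H * real n * norm x ^ 2 + norm (u n * x))) sequentially"
    and us: "eventually (\<lambda>n. u n * s n = of_nat (k n)) sequentially"
    and k: "filterlim k at_top sequentially"
    and s: "eventually (\<lambda>n. real n * norm (s n) ^ 2 \<le> B) sequentially"
    and k_n: "(\<lambda>n. real (k n) / real n) \<longlonglongrightarrow> 0"
  shows "(\<lambda>n. (deriv ^^ k n) (E n) 0 / u n ^ k n) \<longlonglongrightarrow> 0"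
proof (rule Lim_null_comparison)
  define A' where "A' = exp 1 * (\<bar>A\<bar> * exp (\<bar>H\<bar> * B))"
  have k1: "eventually (\<lambda>n. k n \<ge> 1) sequentially"
    using k unfolding filterlim_at_top by blast
  have "eventually (\<lambda>n. norm (s n) < R) sequentially"
    using tendstoD[OF tendsto_0_if_mult_square_bounded[OF s] R] by (auto elim!: eventually_mono)
  then show "eventually (\<lambda>n. norm ((deriv ^^ k n) (E n) 0 / u n ^ k n)
      \<le> A' * (real (k n) / real n)) sequentially"
    using E_le us s k1 eventually_gt_at_top[of 0]
  proof eventually_elim
    case (elim n)
    have r: "norm (s n) > 0" using elim(3,5) by (cases "s n = 0") auto
    have ur: "norm (u n) * norm (s n) = real (k n)"
      using arg_cong[OF elim(3), of norm] by (simp add: norm_mult)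
    have "norm (E n x) \<le> (\<bar>A\<bar> / real n * exp (\<bar>H\<bar> * B)) * exp (real (k n))"
      if x: "norm x = norm (s n)" for x
    proof -
      have "H * real n * norm x ^ 2 \<le> \<bar>H\<bar> * (real n * norm (s n) ^ 2)"
        using x by (simp add: mult.assoc mult_right_mono)
      also have "\<dots> \<le> \<bar>H\<bar> * B"
        using elim(4) by (intro mult_left_mono) auto
      finally have "H * real n * norm x ^ 2 + norm (u n * x) \<le> \<bar>H\<bar> * B + real (k n)"
        using x ur by (simp add: norm_mult)
      then have "A / real n * exp (H * real n * norm x ^ 2 + norm (u n * x))
          \<le> \<bar>A\<bar> / real n * exp (\<bar>H\<bar> * B + real (k n))"
        by (intro mult_mono divide_right_mono) auto
      moreover have "x \<in> ball 0 R" using x elim(1) by simp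
      ultimately show ?thesis using elim(2) by (fastforce simp: exp_add mult_ac)
    qed
    from higher_deriv_div_power_le[OF hol r elim(1) ur elim(5) this]
    show ?case by (simp add: A'_def mult_ac)
  qed
  show "(\<lambda>n. A' * (real (k n) / real n)) \<longlonglongrightarrow> 0"
    by (rule tendsto_mult_right_zero[OF k_n])
qed

lemma saddle_point_approx:
  fixes f G :: "nat \<Rightarrow> complex \<Rightarrow> complex" and u s :: "nat \<Rightarrow> complex" and k :: "nat \<Rightarrow> nat"
  assumes f: "\<And>n. f n holomorphic_on ball 0 R" and G: "\<And>n. G n holomorphic_on ball 0 R"
    and R: "R > 0"
    and G_le: "\<And>n x. norm x < R \<Longrightarrow> norm (G n x) \<le> M * exp (H * real n * norm x ^ 2)"
    and f_approx: "eventually (\<lambda>n. \<forall>x\<in>ball 0 R.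
        norm (f n x - G n x * exp (u n * x)) \<le> C / real n * norm (G n x * exp (u n * x))) sequentially"
    and us: "eventually (\<lambda>n. u n * s n = of_nat (k n)) sequentially"
    and k: "filterlim k at_top sequentially"
    and s: "eventually (\<lambda>n. real n * norm (s n) ^ 2 \<le> B) sequentially"
    and k_n: "(\<lambda>n. real (k n) / real n) \<longlonglongrightarrow> 0"
  shows "(\<lambda>n. (deriv ^^ k n) (f n) 0 / u n ^ k n - G n (s n)) \<longlonglongrightarrow> 0"
proof -
  define E where "E n x = f n x - G n x * exp (u n * x)" for n x
  have hol: "(\<lambda>x. G n x * exp (u n * x)) holomorphic_on ball 0 R" for n
    by (intro holomorphic_intros G)
  have E: "E n holomorphic_on ball 0 R" for n
    unfolding E_def by (intro holomorphic_intros f hol)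
  have "(deriv ^^ k n) (f n) 0 = (deriv ^^ k n) (\<lambda>x. G n x * exp (u n * x)) 0 + (deriv ^^ k n) (E n) 0" for n
  proof -
    have "(\<lambda>x. G n x * exp (u n * x) + E n x) = f n" by (simp add: E_def fun_eq_iff)
    moreover have "(deriv ^^ k n) (\<lambda>x. G n x * exp (u n * x) + E n x) 0
        = (deriv ^^ k n) (\<lambda>x. G n x * exp (u n * x)) 0 + (deriv ^^ k n) (E n) 0"
      using R by (intro higher_deriv_add[OF hol E open_ball]) simp
    ultimately show ?thesis by simp
  qed
  then have split: "(deriv ^^ k n) (f n) 0 / u n ^ k n - G n (s n)
      = ((deriv ^^ k n) (\<lambda>x. G n x * exp (u n * x)) 0 / u n ^ k n - G n (s n))
        + (deriv ^^ k n) (E n) 0 / u n ^ k n" for n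
    by (simp add: add_divide_distrib)
  have "(\<lambda>n. (deriv ^^ k n) (\<lambda>x. G n x * exp (u n * x)) 0 / u n ^ k n - G n (s n)) \<longlonglongrightarrow> 0"
    by (rule saddle_point_main_term[OF G R G_le us k s])
  moreover have "(\<lambda>n. (deriv ^^ k n) (E n) 0 / u n ^ k n) \<longlonglongrightarrow> 0"
  proof (rule saddle_point_error_term[OF E R _ us k s k_n])
    show "eventually (\<lambda>n. \<forall>x\<in>ball 0 R. norm (E n x)
        \<le> \<bar>C\<bar> * \<bar>M\<bar> / real n * exp (H * real n * norm x ^ 2 + norm (u n * x))) sequentially"
      using f_approx
    proof eventually_elim
      case (elim n)
      show ?case
      proof
        fix x :: complex assume x: "x \<in> ball 0 R"
        have "norm (E n x) \<le> C / real n * (norm (G n x) * norm (exp (u n * x)))"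
          using elim x by (simp add: E_def norm_mult)
        also have "\<dots> \<le> \<bar>C\<bar> / real n * (\<bar>M\<bar> * exp (H * real n * norm x ^ 2) * exp (norm (u n * x)))"
          using G_le[of x n] x
          by (intro mult_mono divide_right_mono order.refl norm_exp)
             (auto intro: order_trans[OF _ mult_right_mono[OF abs_ge_self]])
        also have "\<dots> = \<bar>C\<bar> * \<bar>M\<bar> / real n * exp (H * real n * norm x ^ 2 + norm (u n * x))"
          by (simp add: exp_add)
        finally show "norm (E n x) \<le> \<bar>C\<bar> * \<bar>M\<bar> / real n * exp (H * real n * norm x ^ 2 + norm (u n * x))" .
      qed
    qed
  qed
  ultimately show ?thesis unfolding split by (rule tendsto_add_zero)
qed

lemma saddle_point_scaling:
  fixes a :: complex and k :: "nat \<Rightarrow> nat"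
  assumes a: "a \<noteq> 0" and k_sqrt: "eventually (\<lambda>n. real (k n) ^ 2 \<le> B * real n) sequentially"
  shows "eventually (\<lambda>n. real n * norm (of_nat (k n) / (of_nat n * a)) ^ 2 \<le> B / norm a ^ 2) sequentially"
    and "(\<lambda>n. real (k n) / real n) \<longlonglongrightarrow> 0"
proof -
  have k_sq: "eventually (\<lambda>n. real n * norm (real (k n) / real n) ^ 2 \<le> B) sequentially"
    using k_sqrt eventually_gt_at_top[of 0]
    by eventually_elim (simp add: power2_eq_square pos_divide_le_eq)
  then show "eventually (\<lambda>n. real n * norm (of_nat (k n) / (of_nat n * a)) ^ 2 \<le> B / norm a ^ 2) sequentially"
  proof eventually_elim
    case (elim n)
    have "real n * norm (of_nat (k n) / (of_nat n * a)) ^ 2 = real n * norm (real (k n) / real n) ^ 2 / norm a ^ 2"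
      by (simp add: norm_divide norm_mult power_divide power_mult_distrib)
    with elim show ?case by (simp add: divide_right_mono)
  qed
  show "(\<lambda>n. real (k n) / real n) \<longlonglongrightarrow> 0"
    using tendsto_0_if_mult_square_bounded[OF k_sq] by simp
qed

lemma asymp_equiv_mult_if_div_diff_tendsto_0:
  fixes f g h :: "'a \<Rightarrow> 'b::real_normed_field"
  assumes lim: "((\<lambda>x. f x / g x - h x) \<longlongrightarrow> 0) F" and g: "eventually (\<lambda>x. g x \<noteq> 0) F"
    and m: "m > 0" and h: "eventually (\<lambda>x. m \<le> norm (h x)) F"
  shows "f \<sim>[F] (\<lambda>x. g x * h x)"
proof (rule asymp_equivI')
  have "eventually (\<lambda>x. norm (f x / (g x * h x) - 1) \<le> norm (f x / g x - h x) / m) F"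
    using g h
  proof eventually_elim
    case (elim x)
    then have "h x \<noteq> 0" using m by auto
    with elim(1) have "f x / (g x * h x) - 1 = (f x / g x - h x) / h x"
      by (simp add: field_simps)
    then show ?case
      using elim(2) m by (simp add: norm_divide) (rule divide_left_mono, auto simp: zero_less_mult_iff)
  qed
  moreover have "((\<lambda>x. norm (f x / g x - h x) / m) \<longlongrightarrow> 0) F"
    using tendsto_divide[OF tendsto_norm_zero[OF lim] tendsto_const[of m]] m by simp
  ultimately have "((\<lambda>x. f x / (g x * h x) - 1) \<longlongrightarrow> 0) F"
    by (auto intro: Lim_null_comparison)
  then show "((\<lambda>x. f x / (g x * h x)) \<longlongrightarrow> 1) F" by (rule LIM_zero_cancel)
qed

lemma saddle_point_asymptotic_normalized:
  fixes f :: "nat \<Rightarrow> complex \<Rightarrow> complex" and c \<psi> :: "complex \<Rightarrow> complex"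
    and a :: complex and k :: "nat \<Rightarrow> nat"
  assumes c: "c holomorphic_on ball 0 R" and \<psi>: "\<psi> holomorphic_on ball 0 R" and R: "R > 0"
    and \<psi>0: "\<psi> 0 = 1" and \<psi>'0: "deriv \<psi> 0 = 0" and c0: "c 0 \<noteq> 0" and a: "a \<noteq> 0"
    and f: "\<And>n. f n holomorphic_on ball 0 R"
    and f_approx: "eventually (\<lambda>n. \<forall>x\<in>ball 0 R.
        norm (f n x - c x * \<psi> x ^ n * exp (of_nat n * a * x))
          \<le> C / real n * norm (c x * \<psi> x ^ n * exp (of_nat n * a * x))) sequentially"
    and k: "filterlim k at_top sequentially"
    and k_sqrt: "eventually (\<lambda>n. real (k n) ^ 2 \<le> B * real n) sequentially"
  shows "(\<lambda>n. (deriv ^^ k n) (f n) 0) \<sim>[sequentially]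
           (\<lambda>n. (of_nat n * a) ^ k n * (c 0 * exp (of_nat n * (deriv (deriv \<psi>) 0 / 2)
              * (of_nat (k n) / (of_nat n * a)) ^ 2)))"
proof -
  define r where "r = R / 2"
  define u where "u n = of_nat n * a" for n
  txt \<open>s n is the saddle point of exp(u n x) / x^(k n).\<close>
  define s where "s n = of_nat (k n) / u n" for n
  define \<beta> where "\<beta> n = of_nat n * (deriv (deriv \<psi>) 0 / 2) * s n ^ 2" for n
  have r: "0 < r" "r < R" and sub: "ball 0 r \<subseteq> ball 0 R" using R by (auto simp: r_def)
  obtain M H where G_le: "\<And>n x. norm x \<le> r \<Longrightarrow> norm (c x * \<psi> x ^ n) \<le> M * exp (H * real n * norm x ^ 2)"
    using holomorphic_mult_power_le_exp[OF c \<psi> r \<psi>0 \<psi>'0] by blast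
  have s: "eventually (\<lambda>n. real n * norm (s n) ^ 2 \<le> B / norm a ^ 2) sequentially"
    and k_n: "(\<lambda>n. real (k n) / real n) \<longlonglongrightarrow> 0"
    using saddle_point_scaling[OF a k_sqrt] by (simp_all add: s_def u_def)
  have us: "eventually (\<lambda>n. u n * s n = of_nat (k n)) sequentially"
    using eventually_gt_at_top[of 0] by eventually_elim (simp add: s_def u_def a)
  have "(\<lambda>n. (deriv ^^ k n) (f n) 0 / u n ^ k n - c (s n) * \<psi> (s n) ^ n) \<longlonglongrightarrow> 0"
  proof (rule saddle_point_approx[OF holomorphic_on_subset[OF f sub] _ r(1) _ _ us k s k_n])
    show "(\<lambda>x. c x * \<psi> x ^ n) holomorphic_on ball 0 r" for n
      using sub by (intro holomorphic_intros holomorphic_on_subset[OF c] holomorphic_on_subset[OF \<psi>])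
    show "eventually (\<lambda>n. \<forall>x\<in>ball 0 r. norm (f n x - c x * \<psi> x ^ n * exp (u n * x))
        \<le> C / real n * norm (c x * \<psi> x ^ n * exp (u n * x))) sequentially"
      using f_approx by eventually_elim (use sub in \<open>auto simp: u_def mult.assoc\<close>)
    show "\<And>n x. norm x < r \<Longrightarrow> norm (c x * \<psi> x ^ n) \<le> M * exp (H * real n * norm x ^ 2)"
      using G_le by simp
  qed
  moreover have "(\<lambda>n. c (s n) * \<psi> (s n) ^ n - c 0 * exp (\<beta> n)) \<longlonglongrightarrow> 0"
    unfolding \<beta>_def using c R
    by (intro mult_power_minus_exp_tendsto_0[OF _ \<psi> R \<psi>0 \<psi>'0 s]
        holomorphic_on_imp_continuous_on[THEN continuous_on_interior]) auto
  ultimately have "(\<lambda>n. (deriv ^^ k n) (f n) 0 / u n ^ k n - c 0 * exp (\<beta> n)) \<longlonglongrightarrow> 0"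
    using tendsto_add_zero by fastforce
  moreover have "eventually (\<lambda>n. u n ^ k n \<noteq> 0) sequentially"
    using eventually_gt_at_top[of 0] by eventually_elim (simp add: u_def a)
  moreover have "eventually (\<lambda>n. norm (c 0) * exp (- (norm (deriv (deriv \<psi>) 0 / 2) * (B / norm a ^ 2)))
      \<le> norm (c 0 * exp (\<beta> n))) sequentially"
    using eventually_norm_scaled_square_le[OF s, of "deriv (deriv \<psi>) 0 / 2"]
  proof eventually_elim
    case (elim n)
    then have "- (norm (deriv (deriv \<psi>) 0 / 2) * (B / norm a ^ 2)) \<le> Re (\<beta> n)"
      using abs_Re_le_cmod[of "\<beta> n"] by (simp add: \<beta>_def)
    then show ?case by (simp add: norm_mult mult_left_mono)
  qed
  ultimately have "(\<lambda>n. (deriv ^^ k n) (f n) 0) \<sim>[sequentially] (\<lambda>n. u n ^ k n * (c 0 * exp (\<beta> n)))"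
    using c0 by (intro asymp_equiv_mult_if_div_diff_tendsto_0) auto
  then show ?thesis by (simp add: u_def s_def \<beta>_def)
qed

text \<open>The exponential factor absorbs the linear term of log \<rho>, which makes \<psi> flat at 0.\<close>

lemma exp_twisted_quotient:
  fixes \<rho> \<psi> :: "complex \<Rightarrow> complex"
  assumes \<rho>: "\<rho> holomorphic_on ball 0 R" and R: "R > 0" and \<rho>0: "\<rho> 0 \<noteq> 0"
    and a: "a = deriv \<rho> 0 / \<rho> 0" and \<psi>: "\<psi> = (\<lambda>x. \<rho> x / \<rho> 0 * exp (- a * x))"
  shows "\<psi> holomorphic_on ball 0 R" and "\<psi> 0 = 1" and "deriv \<psi> 0 = 0"
    and "deriv (deriv \<psi>) 0 = deriv (deriv \<rho>) 0 / \<rho> 0 - a ^ 2"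
    and "\<rho> x ^ n = \<rho> 0 ^ n * (\<psi> x ^ n * exp (of_nat n * a * x))"
proof -
  have \<psi>_split: "\<psi> = (\<lambda>x. (inverse (\<rho> 0) * \<rho> x) * exp ((- a) * x))"
    by (simp add: \<psi> fun_eq_iff divide_inverse_commute)
  have 0: "0 \<in> ball (0::complex) R" using R by simp
  have hol: "(\<lambda>x. inverse (\<rho> 0) * \<rho> x) holomorphic_on ball 0 R" by (intro holomorphic_intros \<rho>)
  show "\<psi> holomorphic_on ball 0 R" unfolding \<psi>_split by (intro holomorphic_intros \<rho>)
  have "(deriv ^^ m) \<psi> 0 = (\<Sum>i=0..m. of_nat (m choose i) * (inverse (\<rho> 0) * (deriv ^^ i) \<rho> 0) * (- a) ^ (m - i))" for m
    using higher_deriv_mult_exp_linear[OF hol open_ball 0, of m "- a"]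
    unfolding \<psi>_split by (simp add: higher_deriv_cmult[OF \<rho> 0 open_ball])
  from this[of 1] this[of 2] \<rho>0 show "deriv \<psi> 0 = 0"
    and "deriv (deriv \<psi>) 0 = deriv (deriv \<rho>) 0 / \<rho> 0 - a ^ 2"
    by (simp_all add: a numeral_2_eq_2 field_simps power2_eq_square)
  show "\<psi> 0 = 1" using \<rho>0 by (simp add: \<psi>)
  have "\<psi> x * exp (a * x) = \<rho> x / \<rho> 0" by (simp add: \<psi> mult.assoc flip: exp_add)
  then have "\<rho> x = \<rho> 0 * (\<psi> x * exp (a * x))" using \<rho>0 by (simp add: field_simps)
  then have "\<rho> x ^ n = \<rho> 0 ^ n * (\<psi> x ^ n * exp (a * x) ^ n)" by (simp add: power_mult_distrib)
  also have "exp (a * x) ^ n = exp (of_nat n * a * x)" by (simp add: mult.assoc flip: exp_of_nat_mult)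
  finally show "\<rho> x ^ n = \<rho> 0 ^ n * (\<psi> x ^ n * exp (of_nat n * a * x))" .
qed

lemma norm_inverse_mult_diff_le:
  fixes L F P :: "'a::real_normed_field"
  assumes L: "L \<noteq> 0" and le: "norm (F - L * P) \<le> e * norm (L * P)"
  shows "norm (inverse L * F - P) \<le> e * norm P"
proof -
  have "inverse L * F - P = inverse L * (F - L * P)" using L by (simp add: algebra_simps)
  then have "norm (inverse L * F - P) = norm (F - L * P) / norm L"
    by (simp add: norm_mult norm_inverse divide_inverse mult.commute)
  also have "\<dots> \<le> e * norm (L * P) / norm L" using le by (simp add: divide_right_mono)
  also have "\<dots> = e * norm P" using L by (simp add: norm_mult)
  finally show ?thesis .
qed

lemma saddle_point_asymptotic:
  fixes F :: "nat \<Rightarrow> complex \<Rightarrow> complex" and c \<rho> :: "complex \<Rightarrow> complex"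
    and l :: "nat \<Rightarrow> complex" and k :: "nat \<Rightarrow> nat"
  assumes c: "c holomorphic_on ball 0 R" and \<rho>: "\<rho> holomorphic_on ball 0 R" and R: "R > 0"
    and c0: "c 0 \<noteq> 0" and \<rho>0: "\<rho> 0 \<noteq> 0" and \<rho>'0: "deriv \<rho> 0 \<noteq> 0"
    and F: "\<And>n. F n holomorphic_on ball 0 R"
    and F_approx: "eventually (\<lambda>n. \<forall>x\<in>ball 0 R.
        norm (F n x - c x * l n * \<rho> x ^ n) \<le> C / real n * norm (c x * l n * \<rho> x ^ n)) sequentially"
    and l: "eventually (\<lambda>n. l n \<noteq> 0) sequentially"
    and k: "filterlim k at_top sequentially"
    and k_sqrt: "eventually (\<lambda>n. real (k n) ^ 2 \<le> B * real n) sequentially"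
  shows "(\<lambda>n. (deriv ^^ k n) (F n) 0) \<sim>[sequentially]
    (\<lambda>n. l n * \<rho> 0 ^ n * (of_nat n * (deriv \<rho> 0 / \<rho> 0)) ^ k n * (c 0
       * exp (of_real (real (k n) ^ 2 / (2 * real n)) * (deriv (deriv \<rho>) 0 * \<rho> 0 / deriv \<rho> 0 ^ 2 - 1))))"
proof -
  define a where "a = deriv \<rho> 0 / \<rho> 0"
  define \<psi> where "\<psi> = (\<lambda>x. \<rho> x / \<rho> 0 * exp (- a * x))"
  define f where "f n x = inverse (l n * \<rho> 0 ^ n) * F n x" for n x
  have a: "a \<noteq> 0" using \<rho>0 \<rho>'0 by (simp add: a_def)
  note \<psi> = exp_twisted_quotient[OF \<rho> R \<rho>0 a_def \<psi>_def]
  have "(\<lambda>n. (deriv ^^ k n) (f n) 0) \<sim>[sequentially]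
      (\<lambda>n. (of_nat n * a) ^ k n * (c 0 * exp (of_nat n * (deriv (deriv \<psi>) 0 / 2) * (of_nat (k n) / (of_nat n * a)) ^ 2)))"
  proof (rule saddle_point_asymptotic_normalized[OF c \<psi>(1) R \<psi>(2,3) c0 a _ _ k k_sqrt])
    show "f n holomorphic_on ball 0 R" for n unfolding f_def by (intro holomorphic_intros F)
    show "eventually (\<lambda>n. \<forall>x\<in>ball 0 R. norm (f n x - c x * \<psi> x ^ n * exp (of_nat n * a * x))
        \<le> C / real n * norm (c x * \<psi> x ^ n * exp (of_nat n * a * x))) sequentially"
      using F_approx l
    proof eventually_elim
      case (elim n)
      have eq: "c x * l n * \<rho> x ^ n = (l n * \<rho> 0 ^ n) * (c x * \<psi> x ^ n * exp (of_nat n * a * x))" for x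
        by (simp add: \<psi>(5)[of x n] mult_ac)
      have "l n * \<rho> 0 ^ n \<noteq> 0" using elim(2) \<rho>0 by simp
      with elim(1)[unfolded eq] show ?case
        unfolding f_def by (blast intro: norm_inverse_mult_diff_le)
    qed
  qed
  then have "(\<lambda>n. l n * \<rho> 0 ^ n * (deriv ^^ k n) (f n) 0) \<sim>[sequentially]
      (\<lambda>n. l n * \<rho> 0 ^ n * ((of_nat n * a) ^ k n
        * (c 0 * exp (of_nat n * (deriv (deriv \<psi>) 0 / 2) * (of_nat (k n) / (of_nat n * a)) ^ 2))))"
    by (rule asymp_equiv_mult[OF asymp_equiv_refl])
  moreover have "eventually (\<lambda>n. l n * \<rho> 0 ^ n * (deriv ^^ k n) (f n) 0 = (deriv ^^ k n) (F n) 0) sequentially"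
    using l
  proof eventually_elim
    case (elim n)
    have "F n = (\<lambda>x. (l n * \<rho> 0 ^ n) * f n x)" using elim \<rho>0 by (simp add: f_def fun_eq_iff field_simps)
    moreover have "f n holomorphic_on ball 0 R" unfolding f_def by (intro holomorphic_intros F)
    ultimately show ?case using R by (simp add: higher_deriv_cmult[OF _ _ open_ball])
  qed
  moreover have "eventually (\<lambda>n. of_nat n * (deriv (deriv \<psi>) 0 / 2) * (of_nat (k n) / (of_nat n * a)) ^ 2
      = of_real (real (k n) ^ 2 / (2 * real n)) * (deriv (deriv \<rho>) 0 * \<rho> 0 / deriv \<rho> 0 ^ 2 - 1)) sequentially"
    using eventually_gt_at_top[of 0]
    by eventually_elim (use \<rho>0 \<rho>'0 in \<open>simp add: \<psi>(4) a_def field_simps power2_eq_square\<close>)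
  ultimately show ?thesis
    by (elim asymp_equiv_transfer eventually_mono) (simp_all add: a_def mult_ac)
qed

lemma
  fixes a :: "nat \<Rightarrow> nat \<Rightarrow> complex"
  assumes conv: "\<And>x. x \<in> ball 0 R \<Longrightarrow> summable (\<lambda>j. a n j * x ^ j)"
  shows holomorphic_on_zcoeff_fun: "zcoeff_fun a n holomorphic_on ball 0 R"
    and higher_deriv_zcoeff_fun: "R > 0 \<Longrightarrow> (deriv ^^ j) (zcoeff_fun a n) 0 = fact j * a n j"
proof -
  have eq: "zcoeff_fun a n = eval_fps (Abs_fps (a n))"
    by (simp add: fun_eq_iff eval_fps_def zcoeff_fun_def)
  have rad: "ereal (norm x) < fps_conv_radius (Abs_fps (a n))" if x: "norm x < R" for x :: complex
  proof -
    define y where "y = complex_of_real ((norm x + R) / 2)"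
    have "0 \<le> norm x + R" using x norm_ge_zero[of x] by linarith
    then have "norm y = (norm x + R) / 2" unfolding y_def norm_of_real by simp
    then have y: "y \<in> ball 0 R" "norm x < norm y" using x by auto
    have "ereal (norm y) \<le> fps_conv_radius (Abs_fps (a n))"
      unfolding fps_conv_radius_def using conv[OF y(1)] by (intro conv_radius_geI) simp
    then show ?thesis
      using y(2) less_le_trans[of "ereal (norm x)" "ereal (norm y)"] by simp
  qed
  then have sub: "ball (0::complex) R \<subseteq> eball 0 (fps_conv_radius (Abs_fps (a n)))" by auto
  then show "zcoeff_fun a n holomorphic_on ball 0 R"
    unfolding eq by (rule holomorphic_on_eval_fps)
  assume "R > 0"
  then have "fps_conv_radius (Abs_fps (a n)) > 0" using rad[of 0] by (simp add: zero_ereal_def)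
  from fps_nth_conv_deriv[OF this, of j] show "(deriv ^^ j) (zcoeff_fun a n) 0 = fact j * a n j"
    by (simp add: eq)
qed

lemma
  fixes k :: "nat \<Rightarrow> nat"
  assumes k: "(\<lambda>n. real (k n)) \<in> \<Theta>(\<lambda>n. sqrt (real n))"
  shows bigtheta_sqrt_filterlim_at_top: "filterlim k at_top sequentially"
    and bigtheta_sqrt_square_le: "\<exists>B. eventually (\<lambda>n. real (k n) ^ 2 \<le> B * real n) sequentially"
proof -
  obtain c1 where c1: "c1 > 0" "eventually (\<lambda>n. c1 * sqrt (real n) \<le> real (k n)) sequentially"
    using bigthetaD2[OF k] by (elim landau_omega.bigE) (auto elim!: eventually_mono)
  obtain c2 where c2: "eventually (\<lambda>n. real (k n) \<le> c2 * sqrt (real n)) sequentially"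
    using bigthetaD1[OF k] by (elim landau_o.bigE) (auto elim!: eventually_mono)
  have "filterlim (\<lambda>n. c1 * sqrt (real n)) at_top sequentially"
    using c1(1) by (intro filterlim_tendsto_pos_mult_at_top[OF tendsto_const]
        filterlim_compose[OF sqrt_at_top filterlim_real_sequentially]) auto
  then show "filterlim k at_top sequentially"
    unfolding filterlim_sequentially_iff_filterlim_real by (rule filterlim_at_top_mono) (use c1 in auto)
  show "\<exists>B. eventually (\<lambda>n. real (k n) ^ 2 \<le> B * real n) sequentially"
  proof (intro exI)
    show "eventually (\<lambda>n. real (k n) ^ 2 \<le> c2 ^ 2 * real n) sequentially"
      using c2 by eventually_elim (use power_mono[of _ _ 2] in \<open>fastforce simp: power_mult_distrib\<close>)
  qed
qed

lemma of_real_powr_minus: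
  assumes "n > 0"
  shows "complex_of_real (real n powr (real k - s)) = of_nat n ^ k * of_real (real n powr (- s))"
  using assms by (simp add: powr_diff powr_minus powr_realpow divide_inverse)

theorem mainTheorem5:
  fixes a :: "nat \<Rightarrow> nat \<Rightarrow> complex"
    and c \<rho> :: "complex \<Rightarrow> complex"
    and K :: "complex set"
    and k :: "nat \<Rightarrow> nat"
  assumes c_an: "c analytic_on {0}" and rho_an: "\<rho> analytic_on {0}"
    and c0: "c 0 \<noteq> 0"
    and rho0_real: "\<rho> 0 \<in> \<real>" and rho0_pos: "Re (\<rho> 0) > 0"
    and rho'0: "deriv \<rho> 0 \<noteq> 0"
    and K: "compact K" "0 \<in> interior K"
    and conv: "\<And>n x. x \<in> K \<Longrightarrow> summable (\<lambda>j. a n j * x ^ j)"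
    and est: "\<exists>C N. \<forall>n\<ge>N. \<forall>x\<in>K.
       norm (zcoeff_fun a n x - c x * of_real (real n powr (-5/2)) * \<rho> x ^ n)
         \<le> C / real n * norm (c x * of_real (real n powr (-5/2)) * \<rho> x ^ n)"
    and k: "(\<lambda>n. real (k n)) \<in> \<Theta>(\<lambda>n. sqrt (real n))"
  shows "(\<lambda>n. (fact (k n) :: complex) * a n (k n)) \<sim>[sequentially]
     (\<lambda>n. c 0 * of_real (real n powr (real (k n) - 5/2)) * \<rho> 0 ^ n
        * (deriv \<rho> 0 / \<rho> 0) ^ k n
        * exp (of_real (real (k n) ^ 2 / (2 * real n))
               * (deriv (deriv \<rho>) 0 * \<rho> 0 / (deriv \<rho> 0) ^ 2 - 1)))"
proof -
  obtain R1 R2 R3 where R123: "R1 > 0" "c holomorphic_on ball 0 R1" "R2 > 0" "\<rho> holomorphic_on ball 0 R2"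
    "R3 > 0" "ball 0 R3 \<subseteq> K"
    using c_an rho_an K(2) by (auto simp: analytic_on_def mem_interior)
  define R where "R = min R1 (min R2 R3)"
  have R: "R > 0" "c holomorphic_on ball 0 R" "\<rho> holomorphic_on ball 0 R" "ball 0 R \<subseteq> K"
    using R123 by (auto simp: R_def intro: holomorphic_on_subset[OF _ subset_ball])
  obtain C where approx: "eventually (\<lambda>n. \<forall>x\<in>ball 0 R.
       norm (zcoeff_fun a n x - c x * of_real (real n powr (-5/2)) * \<rho> x ^ n)
         \<le> C / real n * norm (c x * of_real (real n powr (-5/2)) * \<rho> x ^ n)) sequentially"
    using est R(4) unfolding eventually_sequentially by blast
  obtain B where B: "eventually (\<lambda>n. real (k n) ^ 2 \<le> B * real n) sequentially"
    using bigtheta_sqrt_square_le[OF k] by blast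
  have \<rho>0: "\<rho> 0 \<noteq> 0" using rho0_pos by auto
  have hol: "zcoeff_fun a n holomorphic_on ball 0 R" for n
    using R(4) by (intro holomorphic_on_zcoeff_fun conv) auto
  have derivs: "(deriv ^^ j) (zcoeff_fun a n) 0 = fact j * a n j" for n j
    using R by (intro higher_deriv_zcoeff_fun conv) auto
  have "eventually (\<lambda>n. complex_of_real (real n powr (-5/2)) \<noteq> 0) sequentially"
    using eventually_gt_at_top[of 0] by eventually_elim simp
  from saddle_point_asymptotic[OF R(2,3,1) c0 \<rho>0 rho'0 hol approx this
      bigtheta_sqrt_filterlim_at_top[OF k] B]
  show ?thesis
  proof (rule asymp_equiv_transfer)
    show "eventually (\<lambda>n. (deriv ^^ k n) (zcoeff_fun a n) 0 = fact (k n) * a n (k n)) sequentially"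
      by (simp add: derivs)
  qed (rule eventually_mono[OF eventually_gt_at_top[of 0]],
       simp add: of_real_powr_minus power_mult_distrib power_divide mult_ac)
qed

end
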